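(* If $i:A\to B$ is a seminormalization of a monoid $A$ and $f:A\to C$ is any monoid map with $C$ seminormal, then there is a unique monoid map $g:B\to C$ with $g\circ i=f$. In particular, a seminormalization of a monoid is unique up to unique isomorphism.
   Context: A monoid is a pointed commutative monoid (basepoint $0$ with $0\cdot a=0$, identity $1$); maps preserve $0$, $1$, multiplication. $A$ is reduced if $a^2=b^2$ and $a^3=b^3$ imply $a=b$; $A_{\mathrm{red}}$ is the quotient of $A$ by the congruence $a\sim b$ iff $a^n=b^n$ for all $n\gg0$. $A$ is seminormal if it is reduced and whenever $x^3=y^2$ there is $z\in A$ with $x=z^2$, $y=z^3$. A seminormalization of $A$ is a map $A\to B$ with $B$ seminormal such that $A_{\mathrm{red}}\to B$ is injective and for every $b\in B$, $b^n\in A_{\mathrm{red}}$ for all $n\gg0$. *)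

theory Defs
  imports Main
begin

text \<open>Pointed commutative monoids: commutative monoid (identity 1) with an absorbing
basepoint 0. Each monoid is modelled as a type of this class.\<close>
class pcmonoid = comm_monoid_mult + mult_zero

definition monoid_map :: "('a::pcmonoid \<Rightarrow> 'b::pcmonoid) \<Rightarrow> bool" where
  "monoid_map f \<longleftrightarrow> f 0 = 0 \<and> f 1 = 1 \<and> (\<forall>a b. f (a * b) = f a * f b)"

definition reduced :: "'a::pcmonoid itself \<Rightarrow> bool" where
  "reduced _ \<longleftrightarrow> (\<forall>a b :: 'a. a ^ 2 = b ^ 2 \<and> a ^ 3 = b ^ 3 \<longrightarrow> a = b)"

definition seminormal :: "'a::pcmonoid itself \<Rightarrow> bool" where
  "seminormal T \<longleftrightarrow> reduced T \<and>
     (\<forall>x y :: 'a. x ^ 3 = y ^ 2 \<longrightarrow> (\<exists>z. x = z ^ 2 \<and> y = z ^ 3))"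

text \<open>The congruence defining A_red: a ~ b iff a^n = b^n for all n >> 0.\<close>
definition red_equiv :: "'a::pcmonoid \<Rightarrow> 'a \<Rightarrow> bool" where
  "red_equiv a b \<longleftrightarrow> (\<exists>N. \<forall>n\<ge>N. a ^ n = b ^ n)"

text \<open>Seminormalization i : A -> B. Injectivity of A_red -> B means i a = i b only if
a ~ b; the image of A_red in B is the image of i.\<close>
definition seminormalization :: "('a::pcmonoid \<Rightarrow> 'b::pcmonoid) \<Rightarrow> bool" where
  "seminormalization i \<longleftrightarrow> monoid_map i \<and> seminormal TYPE('b) \<and>
     (\<forall>a b. i a = i b \<longrightarrow> red_equiv a b) \<and>
     (\<forall>b. \<exists>N. \<forall>n\<ge>N. b ^ n \<in> range i)"

end

theory Submission
  imports Defs
begin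

text \<open>For \<open>b\<close> in \<open>B\<close> and large \<open>n\<close> write \<open>b^n = i(a_n)\<close>. Since \<open>i\<close> only identifies elements
  that agree in \<open>A_red\<close> and \<open>C\<close> is reduced, \<open>y_n = f(a_n)\<close> is well defined, and it is additive:
  \<open>y_n y_m = y_(n+m)\<close>. In a seminormal monoid every eventually additive sequence is eventually
  \<open>z^n\<close>: if it is additive from \<open>m + 1\<close> on, then \<open>y_(2m)^3 = y_(3m)^2\<close>, so \<open>y_(2m) = z^2\<close> and
  \<open>y_(3m) = z^3\<close> for some \<open>z\<close>, and reducedness shows that setting \<open>y_m = z\<close> keeps it additive.
  The lift sends \<open>b\<close> to this root, which reducedness makes unique; uniqueness of lifts then makes
  the seminormalization unique up to unique isomorphism.\<close>

lemma monoid_map_power: "monoid_map f \<Longrightarrow> f (a ^ n) = f a ^ n"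
  by (induction n) (auto simp: monoid_map_def)

lemma monoid_map_id: "monoid_map id"
  by (simp add: monoid_map_def)

lemma monoid_map_comp: "monoid_map g \<Longrightarrow> monoid_map h \<Longrightarrow> monoid_map (h \<circ> g)"
  by (simp add: monoid_map_def)

lemma red_equiv_monoid_map: "monoid_map f \<Longrightarrow> red_equiv a b \<Longrightarrow> red_equiv (f a) (f b)"
  unfolding red_equiv_def by (metis monoid_map_power)

lemma reduced_eq_if_powers_eq:
  assumes red: "reduced TYPE('a::pcmonoid)" and "\<forall>n\<ge>Suc k. (a::'a) ^ n = b ^ n"
  shows "a = b"
  using assms(2)
proof (induction k)
  case 0
  then show ?case by (metis One_nat_def order_refl power_one_right)
next
  case (Suc k)
  have "Suc k * 2 \<ge> Suc (Suc k)" "Suc k * 3 \<ge> Suc (Suc k)" by simp_all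
  then have "a ^ (Suc k * 2) = b ^ (Suc k * 2)" "a ^ (Suc k * 3) = b ^ (Suc k * 3)"
    using Suc.prems by blast+
  then have "(a ^ Suc k) ^ 2 = (b ^ Suc k) ^ 2" "(a ^ Suc k) ^ 3 = (b ^ Suc k) ^ 3"
    by (simp_all only: power_mult)
  then have "a ^ Suc k = b ^ Suc k"
    using red unfolding reduced_def by blast
  with Suc.prems have "\<forall>n\<ge>Suc k. a ^ n = b ^ n"
    by (metis le_antisym not_less_eq_eq)
  then show ?case by (rule Suc.IH)
qed

lemma reduced_eq_if_red_equiv:
  assumes "reduced TYPE('a::pcmonoid)" and "red_equiv (a::'a) b"
  shows "a = b"
proof -
  obtain N where "\<forall>n\<ge>N. a ^ n = b ^ n"
    using assms(2) unfolding red_equiv_def by blast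
  then have "\<forall>n\<ge>Suc N. a ^ n = b ^ n" by simp
  then show ?thesis by (rule reduced_eq_if_powers_eq[OF assms(1)])
qed

definition additive_from :: "(nat \<Rightarrow> 'a::pcmonoid) \<Rightarrow> nat \<Rightarrow> bool" where
  "additive_from y M \<longleftrightarrow> (\<forall>n\<ge>M. \<forall>m\<ge>M. y n * y m = y (n + m))"

lemma additive_from_power2: "additive_from y M \<Longrightarrow> n \<ge> M \<Longrightarrow> y n ^ 2 = y (2 * n)"
  unfolding additive_from_def by (simp add: power2_eq_square mult_2)

lemma additive_from_power3: "additive_from y M \<Longrightarrow> n \<ge> M \<Longrightarrow> y n ^ 3 = y (3 * n)"
  unfolding additive_from_def
  by (simp add: power3_eq_cube numeral_3_eq_3 add.assoc[symmetric] mult_2)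

lemma additive_from_extend:
  assumes sn: "seminormal TYPE('c::pcmonoid)" and y: "additive_from (y :: nat \<Rightarrow> 'c) (Suc (Suc k))"
  shows "\<exists>z. additive_from (y(Suc k := z)) (Suc k)"
proof -
  define m where "m = Suc k"
  have red: "reduced TYPE('c)" using sn unfolding seminormal_def by blast
  have m_big: "2 * m \<ge> Suc (Suc k)" "3 * m \<ge> Suc (Suc k)" unfolding m_def by auto
  have "y (2 * m) ^ 3 = y (3 * m) ^ 2"
    using additive_from_power3[OF y m_big(1)] additive_from_power2[OF y m_big(2)]
    by (simp add: ac_simps)
  then obtain z where z: "y (2 * m) = z ^ 2" "y (3 * m) = z ^ 3"
    using sn unfolding seminormal_def by blast
  have add: "y p * y q = y (p + q)" if "p \<ge> Suc (Suc k)" "q \<ge> Suc (Suc k)" for p q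
    using y that unfolding additive_from_def by blast
  have shift: "z * y n = y (n + m)" if n: "n \<ge> Suc (Suc k)" for n
  proof -
    have nm: "n + m \<ge> Suc (Suc k)" using n by simp
    have "(z * y n) ^ 2 = y (2 * m) * y (2 * n)"
      using z additive_from_power2[OF y n] by (simp add: power_mult_distrib)
    also have "\<dots> = y (2 * (n + m))"
      using add[of "2 * m" "2 * n"] m_big n by (simp add: add_mult_distrib2 add.commute)
    also have "\<dots> = y (n + m) ^ 2"
      using additive_from_power2[OF y nm] by simp
    finally have square: "(z * y n) ^ 2 = y (n + m) ^ 2" .
    have "(z * y n) ^ 3 = y (3 * m) * y (3 * n)"
      using z additive_from_power3[OF y n] by (simp add: power_mult_distrib)
    also have "\<dots> = y (3 * (n + m))"
      using add[of "3 * m" "3 * n"] m_big n by (simp add: add_mult_distrib2 add.commute)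
    also have "\<dots> = y (n + m) ^ 3"
      using additive_from_power3[OF y nm] by simp
    finally have cube: "(z * y n) ^ 3 = y (n + m) ^ 3" .
    show ?thesis using red square cube unfolding reduced_def by blast
  qed
  define y' where "y' = y(m := z)"
  have y'_m: "y' m * y' n = y' (m + n)" if "n \<ge> m" for n
  proof (cases "n = m")
    case True
    then show ?thesis using z m_big by (simp add: y'_def power2_eq_square mult_2)
  next
    case False
    then show ?thesis using that shift[of n] by (simp add: y'_def m_def add.commute)
  qed
  have "additive_from y' m"
    unfolding additive_from_def
  proof (intro allI impI)
    fix n n' assume n: "n \<ge> m" and n': "n' \<ge> m"
    consider "n = m" | "n' = m" | "n \<ge> Suc m" "n' \<ge> Suc m"
      using n n' by linarith
    then show "y' n * y' n' = y' (n + n')"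
    proof cases
      case 1
      then show ?thesis using y'_m n' by simp
    next
      case 2
      then show ?thesis using y'_m n by (metis add.commute mult.commute)
    next
      case 3
      then show ?thesis using y unfolding additive_from_def y'_def m_def by simp
    qed
  qed
  then show ?thesis unfolding y'_def m_def by blast
qed

lemma seminormal_additive_root:
  assumes "seminormal TYPE('c::pcmonoid)" and "additive_from (y :: nat \<Rightarrow> 'c) (Suc k)"
  shows "\<exists>z. \<forall>n\<ge>Suc k. z ^ n = y n"
  using assms(2)
proof (induction k arbitrary: y)
  case 0
  have "y 1 ^ n = y n" if "n \<ge> 1" for n
    using that
  proof (induction n rule: dec_induct)
    case (step n)
    then show ?case using "0.prems" unfolding additive_from_def by simp
  qed simp
  then show ?case by auto
next
  case (Suc k)
  obtain z where "additive_from (y(Suc k := z)) (Suc k)"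
    using additive_from_extend[OF assms(1) Suc.prems] by blast
  then obtain w where "\<forall>n\<ge>Suc k. w ^ n = (y(Suc k := z)) n"
    using Suc.IH by blast
  then have "\<forall>n\<ge>Suc (Suc k). w ^ n = y n" by simp
  then show ?case ..
qed

locale seminormal_lifting =
  fixes i :: "'a::pcmonoid \<Rightarrow> 'b::pcmonoid" and f :: "'a \<Rightarrow> 'c::pcmonoid"
  assumes seminormalization: "seminormalization i"
    and monoid_map_f: "monoid_map f"
    and seminormal_target: "seminormal TYPE('c)"
begin

lemma monoid_map_i: "monoid_map i"
  using seminormalization unfolding seminormalization_def by blast

lemma eventually_power_in_range: "\<exists>N. \<forall>n\<ge>N. b ^ n \<in> range i"
  using seminormalization unfolding seminormalization_def by blast

lemma reduced_target: "reduced TYPE('c)"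
  using seminormal_target unfolding seminormal_def by blast

lemma f_eq_if_i_eq:
  assumes "i a = i a'" shows "f a = f a'"
proof -
  have "red_equiv a a'"
    using seminormalization assms unfolding seminormalization_def by blast
  then show ?thesis
    by (intro reduced_eq_if_red_equiv[OF reduced_target] red_equiv_monoid_map[OF monoid_map_f])
qed

text \<open>Any lift of \<open>f\<close> along \<open>i\<close> must send \<open>b\<close> to a \<open>c\<close> with \<open>compatible b c\<close>.\<close>
definition compatible :: "'b \<Rightarrow> 'c \<Rightarrow> bool" where
  "compatible b c \<longleftrightarrow> (\<exists>N. \<forall>n\<ge>N. \<forall>a. b ^ n = i a \<longrightarrow> c ^ n = f a)"

lemma compatible_unique:
  assumes "compatible b c" and "compatible b c'" shows "c = c'"
proof -
  obtain N1 where 1: "\<forall>n\<ge>N1. \<forall>a. b ^ n = i a \<longrightarrow> c ^ n = f a"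
    using assms(1) unfolding compatible_def by blast
  obtain N2 where 2: "\<forall>n\<ge>N2. \<forall>a. b ^ n = i a \<longrightarrow> c' ^ n = f a"
    using assms(2) unfolding compatible_def by blast
  obtain N3 where 3: "\<forall>n\<ge>N3. b ^ n \<in> range i"
    using eventually_power_in_range by blast
  have "\<forall>n\<ge>max N1 (max N2 N3). c ^ n = c' ^ n"
  proof (intro allI impI)
    fix n assume n: "n \<ge> max N1 (max N2 N3)"
    then obtain a where "b ^ n = i a" using 3 by force
    then show "c ^ n = c' ^ n" using 1 2 n by simp
  qed
  then have "red_equiv c c'" unfolding red_equiv_def by blast
  then show ?thesis by (rule reduced_eq_if_red_equiv[OF reduced_target])
qed

lemma compatible_exists: "\<exists>c. compatible b c"
proof -
  obtain N where "\<forall>n\<ge>N. b ^ n \<in> range i"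
    using eventually_power_in_range[of b] by blast
  then have "\<forall>n. \<exists>a. n \<ge> N \<longrightarrow> i a = b ^ n" by (metis rangeE)
  then obtain a where "\<forall>n. n \<ge> N \<longrightarrow> i (a n) = b ^ n"
    by (rule choice[THEN exE])
  then have a: "\<And>n. n \<ge> N \<Longrightarrow> i (a n) = b ^ n" by blast
  define y where "y n = f (a n)" for n
  have "additive_from y (Suc N)"
    unfolding additive_from_def
  proof (intro allI impI)
    fix n m assume "n \<ge> Suc N" "m \<ge> Suc N"
    then have "i (a n * a m) = i (a (n + m))"
      using a monoid_map_i by (simp add: monoid_map_def power_add)
    then have "f (a n * a m) = f (a (n + m))" by (rule f_eq_if_i_eq)
    then show "y n * y m = y (n + m)"
      using monoid_map_f by (simp add: y_def monoid_map_def)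
  qed
  then obtain z where z: "\<forall>n\<ge>Suc N. z ^ n = y n"
    using seminormal_additive_root[OF seminormal_target] by blast
  have "compatible b z"
    unfolding compatible_def
  proof (intro exI[of _ "Suc N"] allI impI)
    fix n a' assume n: "n \<ge> Suc N" and "b ^ n = i a'"
    then have "i (a n) = i a'" using a by simp
    then have "f (a n) = f a'" by (rule f_eq_if_i_eq)
    then show "z ^ n = f a'" using z n by (simp add: y_def)
  qed
  then show ?thesis ..
qed

lemma compatible_mult:
  assumes "compatible b c" and "compatible b' c'" shows "compatible (b * b') (c * c')"
proof -
  obtain N1 where 1: "\<forall>n\<ge>N1. \<forall>a. b ^ n = i a \<longrightarrow> c ^ n = f a"
    using assms(1) unfolding compatible_def by blast
  obtain N2 where 2: "\<forall>n\<ge>N2. \<forall>a. b' ^ n = i a \<longrightarrow> c' ^ n = f a"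
    using assms(2) unfolding compatible_def by blast
  obtain N3 where 3: "\<forall>n\<ge>N3. b ^ n \<in> range i"
    using eventually_power_in_range by blast
  obtain N4 where 4: "\<forall>n\<ge>N4. b' ^ n \<in> range i"
    using eventually_power_in_range by blast
  show ?thesis
    unfolding compatible_def
  proof (intro exI[of _ "max (max N1 N2) (max N3 N4)"] allI impI)
    fix n a assume n: "n \<ge> max (max N1 N2) (max N3 N4)" and a: "(b * b') ^ n = i a"
    obtain a1 a2 where a1: "b ^ n = i a1" and a2: "b' ^ n = i a2"
      using 3 4 n by force
    have "i a = i (a1 * a2)"
      using a a1 a2 monoid_map_i by (simp add: monoid_map_def power_mult_distrib)
    then have "f a = f (a1 * a2)" by (rule f_eq_if_i_eq)
    also have "\<dots> = f a1 * f a2"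
      using monoid_map_f by (simp add: monoid_map_def)
    also have "\<dots> = (c * c') ^ n"
      using 1 2 a1 a2 n by (simp add: power_mult_distrib)
    finally show "(c * c') ^ n = f a" by simp
  qed
qed

lemma compatible_if_lifts:
  assumes "monoid_map h" and "h \<circ> i = f" shows "compatible b (h b)"
  unfolding compatible_def
  using assms by (auto simp: monoid_map_power[symmetric] fun_eq_iff)

lemma compatible_image: "compatible (i a) (f a)"
  unfolding compatible_def
proof (intro exI[of _ 0] allI impI)
  fix n a' assume "i a ^ n = i a'"
  then have "i (a ^ n) = i a'"
    using monoid_map_power[OF monoid_map_i] by simp
  then have "f (a ^ n) = f a'"
    by (rule f_eq_if_i_eq)
  then show "f a ^ n = f a'"
    using monoid_map_power[OF monoid_map_f] by simp
qed

definition lift :: "'b \<Rightarrow> 'c" where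
  "lift b = (SOME c. compatible b c)"

lemma compatible_lift: "compatible b (lift b)"
  unfolding lift_def using compatible_exists by (rule someI_ex)

lemma lift_comp: "lift \<circ> i = f"
  using compatible_unique[OF compatible_lift compatible_image] by auto

lemma monoid_map_lift: "monoid_map lift"
  unfolding monoid_map_def
proof (intro conjI allI)
  show "lift 0 = 0" "lift 1 = 1"
    using lift_comp monoid_map_i monoid_map_f unfolding monoid_map_def by (metis comp_apply)+
  show "lift (b * b') = lift b * lift b'" for b b'
    using compatible_unique compatible_lift compatible_mult by blast
qed

lemma ex1_lift: "\<exists>!g. monoid_map g \<and> g \<circ> i = f"
proof (rule ex1I[of _ lift])
  show "monoid_map lift \<and> lift \<circ> i = f"
    using monoid_map_lift lift_comp by blast
  show "h = lift" if "monoid_map h \<and> h \<circ> i = f" for h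
    using that compatible_if_lifts compatible_lift compatible_unique by blast
qed

end

lemma seminormalization_universal:
  fixes i :: "'a::pcmonoid \<Rightarrow> 'b::pcmonoid" and f :: "'a \<Rightarrow> 'c::pcmonoid"
  assumes "seminormalization i" and "monoid_map f" and "seminormal TYPE('c)"
  shows "\<exists>!g :: 'b \<Rightarrow> 'c. monoid_map g \<and> g \<circ> i = f"
proof -
  interpret seminormal_lifting i f using assms by unfold_locales
  show ?thesis by (rule ex1_lift)
qed

lemma ex1_unique: "\<exists>!x. P x \<Longrightarrow> P a \<Longrightarrow> P b \<Longrightarrow> a = b"
  by blast

lemma seminormalization_unique_iso:
  fixes i :: "'a::pcmonoid \<Rightarrow> 'b::pcmonoid" and j :: "'a \<Rightarrow> 'd::pcmonoid"
  assumes si: "seminormalization i" and sj: "seminormalization j"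
  shows "\<exists>!g :: 'b \<Rightarrow> 'd. monoid_map g \<and> bij g \<and> g \<circ> i = j"
proof -
  have mi: "monoid_map i" and sb: "seminormal TYPE('b)"
    using si unfolding seminormalization_def by auto
  have mj: "monoid_map j" and sd: "seminormal TYPE('d)"
    using sj unfolding seminormalization_def by auto
  have uj: "\<exists>!g :: 'b \<Rightarrow> 'd. monoid_map g \<and> g \<circ> i = j"
    using si mj sd by (rule seminormalization_universal)
  then obtain g where g: "monoid_map g" "g \<circ> i = j" by blast
  obtain h where h: "monoid_map h" "h \<circ> j = i"
    using seminormalization_universal[OF sj mi sb] by blast
  have "h \<circ> g = id"
  proof (rule ex1_unique[OF seminormalization_universal[OF si mi sb]])
    show "monoid_map (h \<circ> g) \<and> (h \<circ> g) \<circ> i = i"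
      using monoid_map_comp[OF g(1) h(1)] g(2) h(2) by (simp add: comp_assoc)
    show "monoid_map id \<and> id \<circ> i = i" using monoid_map_id by simp
  qed
  moreover have "g \<circ> h = id"
  proof (rule ex1_unique[OF seminormalization_universal[OF sj mj sd]])
    show "monoid_map (g \<circ> h) \<and> (g \<circ> h) \<circ> j = j"
      using monoid_map_comp[OF h(1) g(1)] g(2) h(2) by (simp add: comp_assoc)
    show "monoid_map id \<and> id \<circ> j = j" using monoid_map_id by simp
  qed
  ultimately have "bij g" by (rule o_bij)
  show ?thesis
  proof (rule ex1I[of _ g])
    show "monoid_map g \<and> bij g \<and> g \<circ> i = j" using g \<open>bij g\<close> by blast
    show "g' = g" if "monoid_map g' \<and> bij g' \<and> g' \<circ> i = j" for g'
      using ex1_unique[OF uj] that g by blast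
  qed
qed

theorem lemma1p11:
  fixes i :: "'a::pcmonoid \<Rightarrow> 'b::pcmonoid" and f :: "'a \<Rightarrow> 'c::pcmonoid"
  assumes "seminormalization i" and "monoid_map f" and "seminormal TYPE('c)"
  shows "(\<exists>!g :: 'b \<Rightarrow> 'c. monoid_map g \<and> g \<circ> i = f) \<and>
         (\<forall>j :: 'a \<Rightarrow> 'd::pcmonoid. seminormalization j \<longrightarrow>
            (\<exists>!g :: 'b \<Rightarrow> 'd. monoid_map g \<and> bij g \<and> g \<circ> i = j))"
  using seminormalization_universal[OF assms] seminormalization_unique_iso[OF assms(1)]
  by (intro conjI allI impI)

end
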